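(* Let $\Lambda$ be a row-finite $k$-graph with no sources, $S$ a semigroup, $\eta:\Lambda\to S$ a functor and $\Lambda\times_\eta S$ the associated skew product graph. If $\Lambda$ is aperiodic then $\Lambda\times_\eta S$ is aperiodic.
   Context: All semigroups are countable, cancellative, with identity. A $k$-graph is a countable category $\Lambda$ with a functor $d:\Lambda\to\mathbb{N}^k$ with unique factorisation; $\Lambda^n=d^{-1}(n)$, $\Lambda^0$ = vertices, $v\Lambda=\{\lambda:r(\lambda)=v\}$; row-finite: $v\Lambda^n$ finite; no sources: $v\Lambda^n\ne\emptyset$ for $n\ne0$. The skew product $\Lambda\times_\eta S$ has vertices $\Lambda^0\times S$, morphisms $\Lambda\times S$, $r(\lambda,t)=(r(\lambda),t)$, $s(\lambda,t)=(s(\lambda),t\eta(\lambda))$, $(\lambda,t)(\mu,t\eta(\lambda))=(\lambda\mu,t)$, $d(\lambda,t)=d(\lambda)$. $\lambda(m,n)$ is the unique path of degree $n-m$ with $\lambda=\lambda'\lambda(m,n)\lambda''$, $d(\lambda')=m$. A $k$-graph $\Gamma$ is aperiodic if for every $v\in\Gamma^0$ and all $m\neq n\in\mathbb{N}^k$ there is $\lambda\in v\Gamma$ with $d(\lambda)\ge m\vee n$ and $\lambda(m,m+d(\lambda)-(m\vee n))\ne\lambda(n,n+d(\lambda)-(m\vee n))$. *)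

theory Defs
  imports "HOL-Library.Function_Algebras" "HOL-Library.Countable_Set" "HOL-Algebra.Group"
begin

text \<open>A k-graph: a countable small category (objects = vertices, morphisms = paths)
  together with a degree functor into N^k, here represented as functions 'k => nat
  for a finite index type 'k (so k = CARD('k)).\<close>

record ('v, 'a, 'k) kgraph =
  kg_verts :: "'v set"
  kg_mors  :: "'a set"
  kg_r     :: "'a \<Rightarrow> 'v"
  kg_s     :: "'a \<Rightarrow> 'v"
  kg_comp  :: "'a \<Rightarrow> 'a \<Rightarrow> 'a"
  kg_id    :: "'v \<Rightarrow> 'a"
  kg_deg   :: "'a \<Rightarrow> ('k \<Rightarrow> nat)"

definition is_kgraph :: "('v, 'a, 'k::finite) kgraph \<Rightarrow> bool" where
  "is_kgraph G \<longleftrightarrow>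
     countable (kg_verts G) \<and> countable (kg_mors G) \<and>
     (\<forall>x\<in>kg_mors G. kg_r G x \<in> kg_verts G \<and> kg_s G x \<in> kg_verts G) \<and>
     (\<forall>v\<in>kg_verts G. kg_id G v \<in> kg_mors G \<and> kg_r G (kg_id G v) = v \<and> kg_s G (kg_id G v) = v) \<and>
     (\<forall>x\<in>kg_mors G. \<forall>y\<in>kg_mors G. kg_s G x = kg_r G y \<longrightarrow>
        kg_comp G x y \<in> kg_mors G \<and> kg_r G (kg_comp G x y) = kg_r G x \<and>
        kg_s G (kg_comp G x y) = kg_s G y) \<and>
     (\<forall>x\<in>kg_mors G. \<forall>y\<in>kg_mors G. \<forall>z\<in>kg_mors G.
        kg_s G x = kg_r G y \<and> kg_s G y = kg_r G z \<longrightarrow>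
        kg_comp G (kg_comp G x y) z = kg_comp G x (kg_comp G y z)) \<and>
     (\<forall>x\<in>kg_mors G. kg_comp G (kg_id G (kg_r G x)) x = x \<and>
        kg_comp G x (kg_id G (kg_s G x)) = x) \<and>
     (\<forall>v\<in>kg_verts G. kg_deg G (kg_id G v) = 0) \<and>
     (\<forall>x\<in>kg_mors G. \<forall>y\<in>kg_mors G. kg_s G x = kg_r G y \<longrightarrow>
        kg_deg G (kg_comp G x y) = kg_deg G x + kg_deg G y) \<and>
     \<comment> \<open>unique factorisation\<close>
     (\<forall>x\<in>kg_mors G. \<forall>m n. kg_deg G x = m + n \<longrightarrow>
        (\<exists>!p. fst p \<in> kg_mors G \<and> snd p \<in> kg_mors G \<and> kg_s G (fst p) = kg_r G (snd p) \<and>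
              kg_deg G (fst p) = m \<and> kg_deg G (snd p) = n \<and>
              kg_comp G (fst p) (snd p) = x))"

definition row_finite :: "('v, 'a, 'k::finite) kgraph \<Rightarrow> bool" where
  "row_finite G \<longleftrightarrow> (\<forall>v\<in>kg_verts G. \<forall>n.
      finite {x\<in>kg_mors G. kg_r G x = v \<and> kg_deg G x = n})"

definition no_sources :: "('v, 'a, 'k::finite) kgraph \<Rightarrow> bool" where
  "no_sources G \<longleftrightarrow> (\<forall>v\<in>kg_verts G. \<forall>n. n \<noteq> 0 \<longrightarrow>
      {x\<in>kg_mors G. kg_r G x = v \<and> kg_deg G x = n} \<noteq> {})"

definition seg :: "('v, 'a, 'k::finite) kgraph \<Rightarrow> 'a \<Rightarrow> ('k \<Rightarrow> nat) \<Rightarrow> ('k \<Rightarrow> nat) \<Rightarrow> 'a" where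
  "seg G x m n = (THE y. \<exists>x1 x2. x1 \<in> kg_mors G \<and> y \<in> kg_mors G \<and> x2 \<in> kg_mors G \<and>
      kg_s G x1 = kg_r G y \<and> kg_s G y = kg_r G x2 \<and>
      kg_deg G x1 = m \<and> kg_deg G y = n - m \<and>
      kg_comp G (kg_comp G x1 y) x2 = x)"

definition aperiodic :: "('v, 'a, 'k::finite) kgraph \<Rightarrow> bool" where
  "aperiodic G \<longleftrightarrow> (\<forall>v\<in>kg_verts G. \<forall>m n. m \<noteq> n \<longrightarrow>
     (\<exists>x\<in>kg_mors G. kg_r G x = v \<and> kg_deg G x \<ge> sup m n \<and>
        seg G x m (m + kg_deg G x - sup m n) \<noteq> seg G x n (n + kg_deg G x - sup m n)))"

text \<open>Standing convention: semigroups are countable, cancellative, with identity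
  (i.e. countable cancellative monoids).\<close>

definition cancel_semigroup :: "('s, 'b) monoid_scheme \<Rightarrow> bool" where
  "cancel_semigroup S \<longleftrightarrow> monoid S \<and> countable (carrier S) \<and>
     (\<forall>a\<in>carrier S. \<forall>b\<in>carrier S. \<forall>c\<in>carrier S.
        (a \<otimes>\<^bsub>S\<^esub> b = a \<otimes>\<^bsub>S\<^esub> c \<longrightarrow> b = c) \<and>
        (b \<otimes>\<^bsub>S\<^esub> a = c \<otimes>\<^bsub>S\<^esub> a \<longrightarrow> b = c))"

definition kg_functor :: "('v, 'a, 'k::finite) kgraph \<Rightarrow> ('s, 'b) monoid_scheme \<Rightarrow> ('a \<Rightarrow> 's) \<Rightarrow> bool" where
  "kg_functor G S \<eta> \<longleftrightarrow>
     (\<forall>x\<in>kg_mors G. \<eta> x \<in> carrier S) \<and>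
     (\<forall>v\<in>kg_verts G. \<eta> (kg_id G v) = \<one>\<^bsub>S\<^esub>) \<and>
     (\<forall>x\<in>kg_mors G. \<forall>y\<in>kg_mors G. kg_s G x = kg_r G y \<longrightarrow>
        \<eta> (kg_comp G x y) = \<eta> x \<otimes>\<^bsub>S\<^esub> \<eta> y)"

definition skew_product :: "('v, 'a, 'k::finite) kgraph \<Rightarrow> ('s, 'b) monoid_scheme \<Rightarrow> ('a \<Rightarrow> 's)
    \<Rightarrow> ('v \<times> 's, 'a \<times> 's, 'k) kgraph" where
  "skew_product G S \<eta> =
     \<lparr> kg_verts = kg_verts G \<times> carrier S,
       kg_mors = kg_mors G \<times> carrier S,
       kg_r = (\<lambda>(x, t). (kg_r G x, t)),
       kg_s = (\<lambda>(x, t). (kg_s G x, t \<otimes>\<^bsub>S\<^esub> \<eta> x)),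
       kg_comp = (\<lambda>(x, t) (y, u). (kg_comp G x y, t)),
       kg_id = (\<lambda>(v, t). (kg_id G v, t)),
       kg_deg = (\<lambda>(x, t). kg_deg G x) \<rparr>"

end

theory Submission imports Defs begin

text \<open>A path of the skew product is a pair (x, t), and a factorisation of (x, t) is forced
  to be ((x1, t), (x2, t \<eta>(x1))) for a factorisation x = x1 x2 in \<Lambda>. Hence the skew product is
  again a k-graph, and the segments of (x, t) lie over the segments of x. A witness x for
  aperiodicity of \<Lambda> at v therefore lifts to the witness (x, t) at (v, t): two segments of
  (x, t) whose first components differ are different.\<close>

locale k_graph =
  fixes G :: "('v, 'a, 'k::finite) kgraph"
  assumes is_kgraph: "is_kgraph G"
begin

lemma comp_closed:
  assumes "x \<in> kg_mors G" "y \<in> kg_mors G" "kg_s G x = kg_r G y"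
  shows "kg_comp G x y \<in> kg_mors G" "kg_r G (kg_comp G x y) = kg_r G x"
    "kg_s G (kg_comp G x y) = kg_s G y" "kg_deg G (kg_comp G x y) = kg_deg G x + kg_deg G y"
  using is_kgraph assms unfolding is_kgraph_def by blast+

lemma countable_verts: "countable (kg_verts G)"
  and countable_mors: "countable (kg_mors G)"
  using is_kgraph unfolding is_kgraph_def by blast+

lemma r_closed: "x \<in> kg_mors G \<Longrightarrow> kg_r G x \<in> kg_verts G"
  and s_closed: "x \<in> kg_mors G \<Longrightarrow> kg_s G x \<in> kg_verts G"
  using is_kgraph unfolding is_kgraph_def by blast+

lemma id_closed:
  assumes "v \<in> kg_verts G"
  shows "kg_id G v \<in> kg_mors G" "kg_r G (kg_id G v) = v" "kg_s G (kg_id G v) = v"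
    "kg_deg G (kg_id G v) = 0"
  using is_kgraph assms unfolding is_kgraph_def by blast+

lemma comp_id:
  assumes "x \<in> kg_mors G"
  shows "kg_comp G (kg_id G (kg_r G x)) x = x" "kg_comp G x (kg_id G (kg_s G x)) = x"
  using is_kgraph assms unfolding is_kgraph_def by blast+

lemma comp_assoc:
  assumes "x \<in> kg_mors G" "y \<in> kg_mors G" "z \<in> kg_mors G"
    and "kg_s G x = kg_r G y" "kg_s G y = kg_r G z"
  shows "kg_comp G (kg_comp G x y) z = kg_comp G x (kg_comp G y z)"
  using is_kgraph assms unfolding is_kgraph_def by blast

lemma factorisation_exists:
  assumes "x \<in> kg_mors G" "m \<le> kg_deg G x"
  obtains x\<^sub>1 x\<^sub>2 where "x\<^sub>1 \<in> kg_mors G" "x\<^sub>2 \<in> kg_mors G" "kg_s G x\<^sub>1 = kg_r G x\<^sub>2"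
    "kg_deg G x\<^sub>1 = m" "kg_deg G x\<^sub>2 = kg_deg G x - m" "kg_comp G x\<^sub>1 x\<^sub>2 = x"
proof -
  have "kg_deg G x = m + (kg_deg G x - m)"
    using assms(2) by (simp add: le_fun_def fun_eq_iff)
  then show ?thesis
    using is_kgraph assms(1) that unfolding is_kgraph_def by blast
qed

lemma factorisation_unique:
  assumes "x\<^sub>1 \<in> kg_mors G" "y\<^sub>1 \<in> kg_mors G" "kg_s G x\<^sub>1 = kg_r G y\<^sub>1"
    and "x\<^sub>2 \<in> kg_mors G" "y\<^sub>2 \<in> kg_mors G" "kg_s G x\<^sub>2 = kg_r G y\<^sub>2"
    and "kg_comp G x\<^sub>1 y\<^sub>1 = kg_comp G x\<^sub>2 y\<^sub>2" "kg_deg G x\<^sub>1 = kg_deg G x\<^sub>2"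
  shows "x\<^sub>1 = x\<^sub>2 \<and> y\<^sub>1 = y\<^sub>2"
proof -
  let ?x = "kg_comp G x\<^sub>1 y\<^sub>1"
  have "?x \<in> kg_mors G" "kg_deg G ?x = kg_deg G x\<^sub>1 + kg_deg G y\<^sub>1"
    using comp_closed[OF assms(1-3)] by simp_all
  moreover have "kg_deg G y\<^sub>1 = kg_deg G y\<^sub>2"
    using comp_closed(4)[OF assms(1-3)] comp_closed(4)[OF assms(4-6)] assms(7,8) by simp
  ultimately have "(x\<^sub>1, y\<^sub>1) = (x\<^sub>2, y\<^sub>2)"
    using is_kgraph assms unfolding is_kgraph_def
    by (smt (verit, best) fst_conv snd_conv)
  then show ?thesis by simp
qed

end

definition is_segment :: "('v, 'a, 'k::finite) kgraph \<Rightarrow> 'a \<Rightarrow> ('k \<Rightarrow> nat) \<Rightarrow> ('k \<Rightarrow> nat) \<Rightarrow> 'a \<Rightarrow> bool" where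
  "is_segment G x m n y \<longleftrightarrow> (\<exists>x\<^sub>1 x\<^sub>2. x\<^sub>1 \<in> kg_mors G \<and> y \<in> kg_mors G \<and> x\<^sub>2 \<in> kg_mors G \<and>
      kg_s G x\<^sub>1 = kg_r G y \<and> kg_s G y = kg_r G x\<^sub>2 \<and>
      kg_deg G x\<^sub>1 = m \<and> kg_deg G y = n - m \<and>
      kg_comp G (kg_comp G x\<^sub>1 y) x\<^sub>2 = x)"

lemma seg_eq_The_is_segment: "seg G x m n = (THE y. is_segment G x m n y)"
  unfolding seg_def is_segment_def by simp

context k_graph
begin

lemma segment_exists:
  assumes x: "x \<in> kg_mors G" and "m \<le> n" "n \<le> kg_deg G x"
  shows "\<exists>y. is_segment G x m n y"
proof -
  obtain x\<^sub>1 z where x\<^sub>1: "x\<^sub>1 \<in> kg_mors G" "z \<in> kg_mors G" "kg_s G x\<^sub>1 = kg_r G z"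
    "kg_deg G x\<^sub>1 = m" "kg_deg G z = kg_deg G x - m" "kg_comp G x\<^sub>1 z = x"
    using factorisation_exists[OF x, of m] assms(2,3) order_trans by blast
  have "n - m \<le> kg_deg G z"
    using x\<^sub>1(5) assms(3) by (simp add: le_fun_def diff_le_mono)
  then obtain y x\<^sub>2 where y: "y \<in> kg_mors G" "x\<^sub>2 \<in> kg_mors G" "kg_s G y = kg_r G x\<^sub>2"
    "kg_deg G y = n - m" "kg_comp G y x\<^sub>2 = z"
    using factorisation_exists[OF x\<^sub>1(2)] by metis
  have "kg_comp G (kg_comp G x\<^sub>1 y) x\<^sub>2 = x"
    using comp_assoc[OF x\<^sub>1(1) y(1,2)] x\<^sub>1 y comp_closed(2)[OF y(1-3)] by metis
  then show ?thesis
    unfolding is_segment_def using x\<^sub>1 y comp_closed(2)[OF y(1-3)] by metis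
qed

lemma segment_unique:
  assumes "is_segment G x m n y" "is_segment G x m n y'"
  shows "y = y'"
proof -
  obtain x\<^sub>1 x\<^sub>2 x\<^sub>1' x\<^sub>2' where
    y: "x\<^sub>1 \<in> kg_mors G" "y \<in> kg_mors G" "x\<^sub>2 \<in> kg_mors G" "kg_s G x\<^sub>1 = kg_r G y"
      "kg_s G y = kg_r G x\<^sub>2" "kg_deg G x\<^sub>1 = m" "kg_deg G y = n - m"
      "kg_comp G (kg_comp G x\<^sub>1 y) x\<^sub>2 = x" and
    y': "x\<^sub>1' \<in> kg_mors G" "y' \<in> kg_mors G" "x\<^sub>2' \<in> kg_mors G" "kg_s G x\<^sub>1' = kg_r G y'"
      "kg_s G y' = kg_r G x\<^sub>2'" "kg_deg G x\<^sub>1' = m" "kg_deg G y' = n - m"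
      "kg_comp G (kg_comp G x\<^sub>1' y') x\<^sub>2' = x"
    using assms unfolding is_segment_def by blast
  have "kg_comp G x\<^sub>1 (kg_comp G y x\<^sub>2) = kg_comp G x\<^sub>1' (kg_comp G y' x\<^sub>2')"
    using comp_assoc[OF y(1-5)] comp_assoc[OF y'(1-5)] y(8) y'(8) by simp
  then have "kg_comp G y x\<^sub>2 = kg_comp G y' x\<^sub>2'"
    using factorisation_unique[OF y(1) _ _ y'(1)] comp_closed[OF y(2,3,5)]
      comp_closed[OF y'(2,3,5)] y(4,6) y'(4,6) by simp
  then show ?thesis
    using factorisation_unique[OF y(2,3,5) y'(2,3,5)] y(7) y'(7) by simp
qed

lemma seg_is_segment:
  assumes "x \<in> kg_mors G" "m \<le> n" "n \<le> kg_deg G x"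
  shows "is_segment G x m n (seg G x m n)"
  unfolding seg_eq_The_is_segment
  using segment_exists[OF assms] segment_unique by (metis theI)

lemma seg_eqI: "is_segment G x m n y \<Longrightarrow> seg G x m n = y"
  unfolding seg_eq_The_is_segment using segment_unique by blast

end

locale k_graph_functor = k_graph G
  for G :: "('v, 'a, 'k::finite) kgraph" +
  fixes S :: "('s, 'b) monoid_scheme" and \<eta> :: "'a \<Rightarrow> 's"
  assumes monoid: "monoid S" and countable_carrier: "countable (carrier S)"
    and eta_functor: "kg_functor G S \<eta>"
begin

lemma eta_closed: "x \<in> kg_mors G \<Longrightarrow> \<eta> x \<in> carrier S"
  using eta_functor unfolding kg_functor_def by blast

lemma eta_id: "v \<in> kg_verts G \<Longrightarrow> \<eta> (kg_id G v) = \<one>\<^bsub>S\<^esub>"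
  using eta_functor unfolding kg_functor_def by blast

lemma eta_comp:
  "x \<in> kg_mors G \<Longrightarrow> y \<in> kg_mors G \<Longrightarrow> kg_s G x = kg_r G y \<Longrightarrow>
    \<eta> (kg_comp G x y) = \<eta> x \<otimes>\<^bsub>S\<^esub> \<eta> y"
  using eta_functor unfolding kg_functor_def by blast

lemma skew_factorisation_ex1:
  assumes X: "X \<in> kg_mors (skew_product G S \<eta>)" and deg: "kg_deg (skew_product G S \<eta>) X = m + n"
  shows "\<exists>!p. fst p \<in> kg_mors (skew_product G S \<eta>) \<and> snd p \<in> kg_mors (skew_product G S \<eta>) \<and>
    kg_s (skew_product G S \<eta>) (fst p) = kg_r (skew_product G S \<eta>) (snd p) \<and>
    kg_deg (skew_product G S \<eta>) (fst p) = m \<and> kg_deg (skew_product G S \<eta>) (snd p) = n \<and>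
    kg_comp (skew_product G S \<eta>) (fst p) (snd p) = X"
    (is "\<exists>!p. ?fact p")
proof -
  obtain x t where xt: "X = (x, t)" "x \<in> kg_mors G" "t \<in> carrier S" "kg_deg G x = m + n"
    using X deg by (cases X) (simp add: skew_product_def)
  then have "m \<le> kg_deg G x"
    by (simp add: le_fun_def)
  then obtain x\<^sub>1 x\<^sub>2 where f: "x\<^sub>1 \<in> kg_mors G" "x\<^sub>2 \<in> kg_mors G" "kg_s G x\<^sub>1 = kg_r G x\<^sub>2"
    "kg_deg G x\<^sub>1 = m" "kg_deg G x\<^sub>2 = kg_deg G x - m" "kg_comp G x\<^sub>1 x\<^sub>2 = x"
    by (rule factorisation_exists[OF xt(2)])
  have "kg_deg G x\<^sub>2 = n"
    using f(5) xt(4) by (simp add: fun_eq_iff)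
  then have "?fact ((x\<^sub>1, t), (x\<^sub>2, t \<otimes>\<^bsub>S\<^esub> \<eta> x\<^sub>1))"
    using f xt eta_closed monoid.m_closed[OF monoid] by (simp add: skew_product_def)
  moreover have "p = ((x\<^sub>1, t), (x\<^sub>2, t \<otimes>\<^bsub>S\<^esub> \<eta> x\<^sub>1))" if "?fact p" for p
  proof -
    obtain y\<^sub>1 t\<^sub>1 y\<^sub>2 t\<^sub>2 where p: "p = ((y\<^sub>1, t\<^sub>1), (y\<^sub>2, t\<^sub>2))"
      by (metis prod.collapse)
    have y: "y\<^sub>1 \<in> kg_mors G" "y\<^sub>2 \<in> kg_mors G" "kg_s G y\<^sub>1 = kg_r G y\<^sub>2"
      "kg_comp G y\<^sub>1 y\<^sub>2 = x" "kg_deg G y\<^sub>1 = m" "t\<^sub>1 = t" "t\<^sub>2 = t \<otimes>\<^bsub>S\<^esub> \<eta> y\<^sub>1"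
      using that xt(1) unfolding p by (auto simp: skew_product_def)
    then show ?thesis
      using factorisation_unique[OF y(1-3) f(1-3)] f(4,6) p by simp
  qed
  ultimately show ?thesis by blast
qed

lemma is_kgraph_skew_product: "is_kgraph (skew_product G S \<eta>)"
proof -
  note S = monoid.m_closed[OF monoid] monoid.r_one[OF monoid] monoid.m_assoc[OF monoid]
  show ?thesis
    unfolding is_kgraph_def
  proof (intro conjI ballI allI impI skew_factorisation_ex1)
    show "countable (kg_verts (skew_product G S \<eta>))" "countable (kg_mors (skew_product G S \<eta>))"
      using countable_verts countable_mors countable_carrier by (simp_all add: skew_product_def)
  next
    fix X assume "X \<in> kg_mors (skew_product G S \<eta>)"
    then show "kg_r (skew_product G S \<eta>) X \<in> kg_verts (skew_product G S \<eta>)"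
      "kg_s (skew_product G S \<eta>) X \<in> kg_verts (skew_product G S \<eta>)"
      using r_closed s_closed eta_closed S by (auto simp: skew_product_def)
  qed (auto simp: skew_product_def comp_closed comp_assoc comp_id id_closed eta_comp eta_id
      eta_closed S)
qed

end

sublocale k_graph_functor \<subseteq> skew: k_graph "skew_product G S \<eta>"
  by (rule k_graph.intro) (rule is_kgraph_skew_product)

lemma window_bounds:
  fixes m n d :: "'k \<Rightarrow> nat"
  assumes "sup m n \<le> d"
  shows "m \<le> m + d - sup m n" "m + d - sup m n \<le> d"
proof -
  have bound: "max (m i) (n i) \<le> d i" for i
    using assms by (simp add: le_fun_def)
  have "m i \<le> m i + d i - max (m i) (n i) \<and> m i + d i - max (m i) (n i) \<le> d i" for i
    using bound[of i] by linarith
  then show "m \<le> m + d - sup m n" "m + d - sup m n \<le> d"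
    by (simp_all add: le_fun_def sup_nat_def)
qed

context k_graph_functor
begin

lemma is_segment_skew_product_fst:
  assumes "is_segment (skew_product G S \<eta>) (x, t) m n Y"
  shows "is_segment G x m n (fst Y)"
proof -
  obtain X\<^sub>1 X\<^sub>2 where "X\<^sub>1 \<in> kg_mors (skew_product G S \<eta>)" "Y \<in> kg_mors (skew_product G S \<eta>)"
    "X\<^sub>2 \<in> kg_mors (skew_product G S \<eta>)"
    "kg_s (skew_product G S \<eta>) X\<^sub>1 = kg_r (skew_product G S \<eta>) Y"
    "kg_s (skew_product G S \<eta>) Y = kg_r (skew_product G S \<eta>) X\<^sub>2"
    "kg_deg (skew_product G S \<eta>) X\<^sub>1 = m" "kg_deg (skew_product G S \<eta>) Y = n - m"
    "kg_comp (skew_product G S \<eta>) (kg_comp (skew_product G S \<eta>) X\<^sub>1 Y) X\<^sub>2 = (x, t)"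
    using assms unfolding is_segment_def by blast
  then show ?thesis
    unfolding is_segment_def
    by (intro exI[of _ "fst X\<^sub>1"] exI[of _ "fst X\<^sub>2"]) (auto simp: skew_product_def split: prod.splits)
qed

lemma fst_seg_skew_product:
  assumes "x \<in> kg_mors G" "t \<in> carrier S" "m \<le> n" "n \<le> kg_deg G x"
  shows "fst (seg (skew_product G S \<eta>) (x, t) m n) = seg G x m n"
proof -
  have "is_segment (skew_product G S \<eta>) (x, t) m n (seg (skew_product G S \<eta>) (x, t) m n)"
    using assms by (intro skew.seg_is_segment) (simp_all add: skew_product_def)
  then show ?thesis
    by (intro seg_eqI[symmetric] is_segment_skew_product_fst)
qed

lemma aperiodic_skew_product:
  assumes "aperiodic G"
  shows "aperiodic (skew_product G S \<eta>)"
  unfolding aperiodic_def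
proof (intro ballI allI impI)
  fix V and m n :: "'k \<Rightarrow> nat"
  assume "V \<in> kg_verts (skew_product G S \<eta>)" "m \<noteq> n"
  then obtain v t where V: "V = (v, t)" "v \<in> kg_verts G" "t \<in> carrier S"
    by (auto simp: skew_product_def)
  then obtain x where x: "x \<in> kg_mors G" "kg_r G x = v" "sup m n \<le> kg_deg G x"
    "seg G x m (m + kg_deg G x - sup m n) \<noteq> seg G x n (n + kg_deg G x - sup m n)"
    using assms \<open>m \<noteq> n\<close> unfolding aperiodic_def by blast
  have "fst (seg (skew_product G S \<eta>) (x, t) m (m + kg_deg G x - sup m n))
      \<noteq> fst (seg (skew_product G S \<eta>) (x, t) n (n + kg_deg G x - sup m n))"
    using x V(3) window_bounds[OF x(3)] window_bounds[of n m] sup_commute[of m n]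
    by (simp add: fst_seg_skew_product)
  then show "\<exists>X\<in>kg_mors (skew_product G S \<eta>). kg_r (skew_product G S \<eta>) X = V \<and>
      sup m n \<le> kg_deg (skew_product G S \<eta>) X \<and>
      seg (skew_product G S \<eta>) X m (m + kg_deg (skew_product G S \<eta>) X - sup m n) \<noteq>
      seg (skew_product G S \<eta>) X n (n + kg_deg (skew_product G S \<eta>) X - sup m n)"
    using x V by (intro bexI[of _ "(x, t)"]) (auto simp: skew_product_def)
qed

end

theorem corollary3p5:
  fixes \<Lambda> :: "('v, 'a, 'k::finite) kgraph"
    and S :: "('s, 'b) monoid_scheme"
    and \<eta> :: "'a \<Rightarrow> 's"
  assumes "is_kgraph \<Lambda>" and "row_finite \<Lambda>" and "no_sources \<Lambda>"
    and "cancel_semigroup S"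
    and "kg_functor \<Lambda> S \<eta>"
    and "aperiodic \<Lambda>"
  shows "aperiodic (skew_product \<Lambda> S \<eta>)"
proof -
  interpret k_graph_functor \<Lambda> S \<eta>
    using assms(1,4,5)
    unfolding k_graph_functor_def k_graph_functor_axioms_def k_graph_def cancel_semigroup_def by blast
  show ?thesis
    using assms(6) by (rule aperiodic_skew_product)
qed

end
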